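(* Let $(x_n)$ be a block sequence in $W$, $X=[x_n]$, $\beta<\omega_1$, and suppose that for every normalised block sequence $(y_n)$ in $X$ and every $K\ge1$, I has a strategy in $F^\beta_X$ to play $(z_0,\dots,z_k)$ such that $(z_0,\dots,z_k)\not\sim_K(y_0,\dots,y_k)$. Then for every normalised block sequence $(y_n)$ in $X$ and every $K\ge1$ there is a sequence $(J_m)_{m\in\mathbb N}$ of finite intervals of $\mathbb N$ with $\min J_m\to\infty$ such that whenever $A\subseteq\mathbb N$ is infinite and contains $0$ and $Z=[x_j: j\notin\bigcup_{m\in A}J_m]$, we have ${\rm rank}\big(T((y_n),Z,K)\big)\le\beta$.
   Context: Let $\mathcal W$ be a real Banach space with Schauder basis $(e_n)$. Fix a countable subfield $\mathfrak F\subseteq\mathbb R$ such that $\|\sum_{n\le m}a_ne_n\|\in\mathfrak F$ whenever all $a_n\in\mathfrak F$, and let $W$ be the $\mathfrak F$-vector space of finite $\mathfrak F$-linear combinations of the $e_n$, with the norm of $\mathcal W$; subspaces and spans $[\cdot]$ are $\mathfrak F$-linear in $W$. For nonzero $x=\sum a_ne_n$, ${\rm supp}(x)=\{n:a_n\neq0\}$, and $x<y$ means $\max{\rm supp}(x)<\min{\rm supp}(y)$. A block sequence is a sequence of nonzero vectors $x_0<x_1<\dots$ (normalised if all have norm $1$); a block subspace is the span of an infinite block sequence; a block sequence in $X$ means one whose terms lie in $X$. $[e_i]_{i>n}$ is the span of $\{e_i:i>n\}$. $(x_i)_{i\le k}\sim_K(y_i)_{i\le k}$ means $\frac1K\|\sum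 a_ix_i\|\le\|\sum a_iy_i\|\le K\|\sum a_ix_i\|$ for all real $a_i$. $T((y_n),Z,K)$ is the tree of all finite sequences $(v_0,\dots,v_k)$ of vectors of $Z$, including the empty one, with $(v_0,\dots,v_k)\sim_K(y_0,\dots,y_k)$. For a well-founded tree $T$, $\rho_T(s)=\sup\{\rho_T(t)+1:s\prec t\in T\}$ ($0$ at terminal nodes) and ${\rm rank}(T)=\sup\{\rho_T(s)+1:s\in T\}$; ill-founded trees have rank $\infty>\gamma$ for all ordinals $\gamma$. Game $F^\beta_X$: in rounds $l=0,1,\dots$, I plays an integer $n_l$ and an ordinal $\xi_l$ with $\xi_0<\beta$ and $\xi_l<\xi_{l-1}$ for $l\ge1$; II plays a finite-dimensional $F_l\subseteq X\cap[e_i]_{i>n_l}$ and a nonzero $z_l\in F_0+\dots+F_l$; the game ends after II's response in the round $k$ with $\xi_k=0$ (immediately with empty outcome if $\beta=0$); outcome $(z_0,\dots,z_k)$. "I has a strategy to play ... such that P" means I can ensure the outcome satisfies P. *)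

theory Defs
  imports "HOL-Analysis.Analysis"
begin

text \<open>Vectors of W are finitely supported real sequences (coefficients w.r.t. the
basis (e_n)); the norm of the ambient Banach space is a function N.\<close>

type_synonym vec = "nat \<Rightarrow> real"

definition supp :: "vec \<Rightarrow> nat set" where
  "supp x = {n. x n \<noteq> 0}"

definition finsupp :: "vec \<Rightarrow> bool" where
  "finsupp x \<longleftrightarrow> finite (supp x)"

definition lincomb :: "nat \<Rightarrow> (nat \<Rightarrow> real) \<Rightarrow> (nat \<Rightarrow> vec) \<Rightarrow> vec" where
  "lincomb k a v = (\<lambda>n. \<Sum>i<k. a i * v i n)"

text \<open>Standing setting: N is a norm on the finitely supported sequences for which the
unit vectors form a Schauder basis of the completion (bounded partial-sum projections);
FF is a countable subfield of the reals closed under norms of FF-combinations.\<close>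

definition setting :: "(vec \<Rightarrow> real) \<Rightarrow> real set \<Rightarrow> bool" where
  "setting N FF \<longleftrightarrow>
     (\<forall>x. finsupp x \<longrightarrow> 0 \<le> N x \<and> (N x = 0 \<longleftrightarrow> x = (\<lambda>_. 0))) \<and>
     (\<forall>x c. finsupp x \<longrightarrow> N (\<lambda>n. c * x n) = \<bar>c\<bar> * N x) \<and>
     (\<forall>x y. finsupp x \<longrightarrow> finsupp y \<longrightarrow> N (\<lambda>n. x n + y n) \<le> N x + N y) \<and>
     (\<exists>C. \<forall>x m. finsupp x \<longrightarrow> N (\<lambda>n. if n \<le> m then x n else 0) \<le> C * N x) \<and>
     countable FF \<and> 0 \<in> FF \<and> 1 \<in> FF \<and>
     (\<forall>a\<in>FF. \<forall>b\<in>FF. a + b \<in> FF \<and> a * b \<in> FF \<and> - a \<in> FF \<and> inverse a \<in> FF) \<and>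
     (\<forall>x. finsupp x \<longrightarrow> (\<forall>n. x n \<in> FF) \<longrightarrow> N x \<in> FF)"

definition WW :: "real set \<Rightarrow> vec set" where
  "WW FF = {x. finsupp x \<and> (\<forall>n. x n \<in> FF)}"

definition fspan :: "real set \<Rightarrow> vec set \<Rightarrow> vec set" where
  "fspan FF S = {x. \<exists>k a v. (\<forall>i<k. a i \<in> FF \<and> v i \<in> S) \<and> x = lincomb k a v}"

definition fdsubspace :: "real set \<Rightarrow> vec set \<Rightarrow> bool" where
  "fdsubspace FF V \<longleftrightarrow> (\<exists>S. finite S \<and> V = fspan FF S)"

definition blockseq :: "vec set \<Rightarrow> (nat \<Rightarrow> vec) \<Rightarrow> bool" where
  "blockseq S x \<longleftrightarrow> (\<forall>n. x n \<in> S \<and> x n \<noteq> (\<lambda>_. 0) \<and>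
      Max (supp (x n)) < Min (supp (x (Suc n))))"

definition nblockseq :: "(vec \<Rightarrow> real) \<Rightarrow> vec set \<Rightarrow> (nat \<Rightarrow> vec) \<Rightarrow> bool" where
  "nblockseq N S y \<longleftrightarrow> blockseq S y \<and> (\<forall>n. N (y n) = 1)"

definition equivK :: "(vec \<Rightarrow> real) \<Rightarrow> real \<Rightarrow> vec list \<Rightarrow> vec list \<Rightarrow> bool" where
  "equivK N K vs ws \<longleftrightarrow> length vs = length ws \<and>
     (\<forall>a::nat \<Rightarrow> real.
        (1 / K) * N (lincomb (length vs) a (\<lambda>i. vs ! i)) \<le> N (lincomb (length ws) a (\<lambda>i. ws ! i)) \<and>
        N (lincomb (length ws) a (\<lambda>i. ws ! i)) \<le> K * N (lincomb (length vs) a (\<lambda>i. vs ! i)))"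

definition Ttree :: "(vec \<Rightarrow> real) \<Rightarrow> (nat \<Rightarrow> vec) \<Rightarrow> vec set \<Rightarrow> real \<Rightarrow> vec list set" where
  "Ttree N y Z K = {vs. set vs \<subseteq> Z \<and> equivK N K vs (map y [0..<length vs])}"

text \<open>Ordinals are elements of a well-ordered type 'o. rho_lt T s \<alpha> means
rho_T(s) < \<alpha>, defined inductively from rho_T(s) = sup{rho_T(t)+1 : s \<prec> t \<in> T}:
rho_T(s) < \<alpha> iff there is \<gamma> < \<alpha> with rho_T(t) < \<gamma> for all proper extensions t \<in> T of s.
Nodes of ill-founded parts never satisfy rho_lt (least fixed point).\<close>
inductive rho_lt :: "'a list set \<Rightarrow> 'a list \<Rightarrow> 'o::wellorder \<Rightarrow> bool" for T where
  "\<gamma> < \<alpha> \<Longrightarrow> (\<And>u. u \<noteq> [] \<Longrightarrow> s @ u \<in> T \<Longrightarrow> rho_lt T (s @ u) \<gamma>) \<Longrightarrow> rho_lt T s \<alpha>"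

text \<open>rank(T) \<le> \<beta> iff rho_T(s) + 1 \<le> \<beta> for all s \<in> T.\<close>
definition rank_le :: "'a list set \<Rightarrow> 'o::wellorder \<Rightarrow> bool" where
  "rank_le T \<beta> \<longleftrightarrow> (\<forall>s\<in>T. rho_lt T s \<beta>)"

definition ozero :: "'o::wellorder \<Rightarrow> bool" where
  "ozero \<xi> \<longleftrightarrow> (\<forall>\<eta>. \<not> \<eta> < \<xi>)"

definition msum :: "vec set list \<Rightarrow> vec set" where
  "msum Fs = {z. \<exists>f. (\<forall>j<length Fs. f j \<in> Fs ! j) \<and> z = (\<lambda>n. \<Sum>j<length Fs. f j n)}"

text \<open>Game F^\<beta>_X. A position is the list h of II's moves (F_j, z_j) so far; a strategy
for I maps h to I's next move (n, \<xi>). II's move (F, z) is legal at h when I has played n.\<close>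
definition II_legal :: "real set \<Rightarrow> vec set \<Rightarrow> (vec set \<times> vec) list \<Rightarrow> nat \<Rightarrow> vec set \<Rightarrow> vec \<Rightarrow> bool" where
  "II_legal FF X h n F z \<longleftrightarrow> fdsubspace FF F \<and> F \<subseteq> X \<and> (\<forall>v\<in>F. \<forall>i\<le>n. v i = 0) \<and>
      z \<noteq> (\<lambda>_. 0) \<and> z \<in> msum (map fst h @ [F])"

definition live :: "real set \<Rightarrow> vec set \<Rightarrow> ((vec set \<times> vec) list \<Rightarrow> nat \<times> 'o::wellorder)
    \<Rightarrow> (vec set \<times> vec) list \<Rightarrow> bool" where
  "live FF X \<sigma> h \<longleftrightarrow> (\<forall>j<length h.
      II_legal FF X (take j h) (fst (\<sigma> (take j h))) (fst (h ! j)) (snd (h ! j)) \<and>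
      \<not> ozero (snd (\<sigma> (take j h))))"

definition complete :: "real set \<Rightarrow> vec set \<Rightarrow> ((vec set \<times> vec) list \<Rightarrow> nat \<times> 'o::wellorder)
    \<Rightarrow> (vec set \<times> vec) list \<Rightarrow> bool" where
  "complete FF X \<sigma> h \<longleftrightarrow> (\<exists>h' F z. h = h' @ [(F, z)] \<and> live FF X \<sigma> h' \<and>
      II_legal FF X h' (fst (\<sigma> h')) F z \<and> ozero (snd (\<sigma> h')))"

definition I_ensures :: "real set \<Rightarrow> vec set \<Rightarrow> 'o::wellorder \<Rightarrow> (vec list \<Rightarrow> bool) \<Rightarrow> bool" where
  "I_ensures FF X \<beta> P \<longleftrightarrow>
     (if ozero \<beta> then P []
      else (\<exists>\<sigma> :: (vec set \<times> vec) list \<Rightarrow> nat \<times> 'o.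
        (\<forall>h. live FF X \<sigma> h \<longrightarrow>
              snd (\<sigma> h) < (if h = [] then \<beta> else snd (\<sigma> (butlast h)))) \<and>
        (\<forall>h. complete FF X \<sigma> h \<longrightarrow> P (map snd h))))"

end

theory Submission
  imports Defs
begin

text \<open>I's strategy \<sigma> wins F^\<beta>_X against 2K-equivalence with (y_n). Only finitely many
  positions arise when II plays spans of x_0, ..., x_(M-1) and vectors from a fixed finite grid,
  so I's integer moves on them are bounded by some move_bound M; iterating
  M \<mapsto> move_bound M + 2 produces the intervals J_m. If Z avoids J_m for all m in A, then II can
  follow any branch of T((y_n), Z, K) inside the game: at the next interval start a of some
  m \<in> A she plays the span of the x_j available to Z below a (all beyond I's move) and a grid
  approximation of the next vector. By a perturbation argument the outcome stays
  2K-equivalent to (y_n), so the game never ends, and the ordinals played by I bound the ranks of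
  the nodes of the branch; hence rank T \<le> \<beta>.\<close>

lemma lincomb_0 [simp]: "lincomb 0 a v = (\<lambda>_. 0)"
  by (simp add: lincomb_def)

lemma lincomb_Suc: "lincomb (Suc k) a v = (\<lambda>n. lincomb k a v n + a k * v k n)"
  by (simp add: lincomb_def)

lemma lincomb_cong:
  "(\<And>i. i < k \<Longrightarrow> a i = a' i) \<Longrightarrow> (\<And>i. i < k \<Longrightarrow> v i = v' i) \<Longrightarrow> lincomb k a v = lincomb k a' v'"
  unfolding lincomb_def by (auto intro!: sum.cong ext)

lemma lincomb_extend_zero:
  "k \<le> k' \<Longrightarrow> (\<And>i. k \<le> i \<Longrightarrow> i < k' \<Longrightarrow> a i = 0) \<Longrightarrow> lincomb k' a v = lincomb k a v"
  unfolding lincomb_def by (rule ext, rule sum.mono_neutral_right) auto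

lemma lincomb_split:
  "k \<le> k' \<Longrightarrow> lincomb k' a v = (\<lambda>n. lincomb k a v n + (\<Sum>i\<in>{k..<k'}. a i * v i n))"
  unfolding lincomb_def by (rule ext) (metis atLeast0LessThan le0 sum.atLeastLessThan_concat)

lemma lincomb_add_coeffs: "lincomb k (\<lambda>i. a i + b i) v = (\<lambda>n. lincomb k a v n + lincomb k b v n)"
  unfolding lincomb_def by (auto simp: distrib_right sum.distrib)

lemma lincomb_diff_coeffs: "(\<lambda>n. lincomb k a v n - lincomb k b v n) = lincomb k (\<lambda>i. a i - b i) v"
  unfolding lincomb_def by (auto simp: sum_subtractf left_diff_distrib)

lemma lincomb_diff_vectors:
  "(\<lambda>n. lincomb k a v n - lincomb k a w n) = lincomb k a (\<lambda>i n. v i n - w i n)"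
  unfolding lincomb_def by (auto simp: sum_subtractf right_diff_distrib)

lemma lincomb_single: "l < k \<Longrightarrow> lincomb k (\<lambda>i. if i = l then c else 0) v = (\<lambda>n. c * v l n)"
  unfolding lincomb_def by (simp add: if_distrib[of "\<lambda>a. a * _"] cong: if_cong)

lemma finsupp_zero [simp]: "finsupp (\<lambda>_. 0)"
  by (simp add: finsupp_def supp_def)

lemma finsupp_add: "finsupp x \<Longrightarrow> finsupp y \<Longrightarrow> finsupp (\<lambda>n. x n + y n)"
  unfolding finsupp_def supp_def by (rule finite_subset[of _ "{n. x n \<noteq> 0} \<union> {n. y n \<noteq> 0}"]) auto

lemma finsupp_scale: "finsupp x \<Longrightarrow> finsupp (\<lambda>n. c * x n)"
  unfolding finsupp_def supp_def by (rule finite_subset[of _ "{n. x n \<noteq> 0}"]) auto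

lemma finsupp_diff: "finsupp x \<Longrightarrow> finsupp y \<Longrightarrow> finsupp (\<lambda>n. x n - y n)"
  unfolding finsupp_def supp_def by (rule finite_subset[of _ "{n. x n \<noteq> 0} \<union> {n. y n \<noteq> 0}"]) auto

lemma finsupp_lincomb: "(\<And>i. i < k \<Longrightarrow> finsupp (v i)) \<Longrightarrow> finsupp (lincomb k a v)"
  by (induction k) (auto simp: lincomb_Suc intro!: finsupp_add finsupp_scale)

locale basis_setting =
  fixes N :: "vec \<Rightarrow> real" and FF :: "real set" and C :: real
  assumes setting: "setting N FF"
    and truncate_bound: "finsupp x \<Longrightarrow> N (\<lambda>n. if n \<le> m then x n else 0) \<le> C * N x"
    and C_ge_1: "1 \<le> C"
begin

lemma N_nonneg: "finsupp x \<Longrightarrow> 0 \<le> N x"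
  using setting unfolding setting_def by blast

lemma N_zero [simp]: "N (\<lambda>_. 0) = 0"
  using setting unfolding setting_def by auto

lemma N_eq_0D: "finsupp x \<Longrightarrow> N x = 0 \<Longrightarrow> x = (\<lambda>_. 0)"
  using setting unfolding setting_def by blast

lemma N_scale: "finsupp x \<Longrightarrow> N (\<lambda>n. c * x n) = \<bar>c\<bar> * N x"
  using setting unfolding setting_def by blast

lemma N_triangle: "finsupp x \<Longrightarrow> finsupp y \<Longrightarrow> N (\<lambda>n. x n + y n) \<le> N x + N y"
  using setting unfolding setting_def by blast

lemma N_minus: "finsupp x \<Longrightarrow> N (\<lambda>n. - x n) = N x"
  using N_scale[of x "-1"] by simp

lemma N_diff_le: "finsupp x \<Longrightarrow> finsupp y \<Longrightarrow> N (\<lambda>n. x n - y n) \<le> N x + N y"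
  using N_triangle[of x "\<lambda>n. - y n"] N_minus[of y] finsupp_scale[of y "-1"] by simp

lemma N_le_add_diff: "finsupp x \<Longrightarrow> finsupp y \<Longrightarrow> N x \<le> N y + N (\<lambda>n. x n - y n)"
  using N_triangle[of y "\<lambda>n. x n - y n"] finsupp_diff by simp

lemma N_lincomb_le:
  "(\<And>i. i < k \<Longrightarrow> finsupp (v i)) \<Longrightarrow> N (lincomb k a v) \<le> (\<Sum>i<k. \<bar>a i\<bar> * N (v i))"
proof (induction k)
  case (Suc k)
  have "N (lincomb (Suc k) a v) \<le> N (lincomb k a v) + N (\<lambda>n. a k * v k n)"
    unfolding lincomb_Suc using Suc.prems by (intro N_triangle finsupp_lincomb finsupp_scale) auto
  also have "\<dots> \<le> (\<Sum>i<k. \<bar>a i\<bar> * N (v i)) + \<bar>a k\<bar> * N (v k)"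
    using Suc by (simp add: N_scale)
  finally show ?case by simp
qed simp

lemma FF_0: "0 \<in> FF" and FF_1: "1 \<in> FF"
  using setting unfolding setting_def by auto

lemma FF_add: "a \<in> FF \<Longrightarrow> b \<in> FF \<Longrightarrow> a + b \<in> FF"
  and FF_mult: "a \<in> FF \<Longrightarrow> b \<in> FF \<Longrightarrow> a * b \<in> FF"
  and FF_uminus: "a \<in> FF \<Longrightarrow> - a \<in> FF"
  and FF_inverse: "a \<in> FF \<Longrightarrow> inverse a \<in> FF"
  using setting unfolding setting_def by auto

lemma FF_of_nat: "of_nat n \<in> FF"
  by (induction n) (auto simp: FF_0 FF_1 FF_add)

lemma FF_of_int: "of_int z \<in> FF"
  using FF_of_nat[of "nat z"] FF_uminus[OF FF_of_nat[of "nat (- z)"]] by (cases "z \<ge> 0") auto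

lemma FF_divide: "a \<in> FF \<Longrightarrow> b \<in> FF \<Longrightarrow> a / b \<in> FF"
  by (simp add: divide_inverse FF_mult FF_inverse)

end

lemma basis_setting_exists:
  assumes st: "setting N FF"
  shows "\<exists>C. basis_setting N FF C"
proof -
  obtain C where C: "\<And>x m. finsupp x \<Longrightarrow> N (\<lambda>n. if n \<le> m then x n else 0) \<le> C * N x"
    using st unfolding setting_def by blast
  have "N (\<lambda>n. if n \<le> m then x n else 0) \<le> max C 1 * N x" if "finsupp x" for x m
  proof -
    have "0 \<le> N x" using st that unfolding setting_def by blast
    then show ?thesis using C[OF that, of m] by (smt (verit) mult_right_mono max.cobounded1)
  qed
  then have "basis_setting N FF (max C 1)" using st by unfold_locales auto
  then show ?thesis ..
qed

section \<open>Block sequences\<close>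

abbreviation block :: "(nat \<Rightarrow> vec) \<Rightarrow> bool" where
  "block b \<equiv> blockseq {w. finsupp w} b"

lemma blockseq_mono: "S \<subseteq> S' \<Longrightarrow> blockseq S b \<Longrightarrow> blockseq S' b"
  unfolding blockseq_def by blast

context
  fixes b :: "nat \<Rightarrow> vec"
  assumes block: "block b"
begin

lemma block_finsupp: "finsupp (b i)"
  using block unfolding blockseq_def by auto

lemma block_supp: "finite (supp (b i))" "supp (b i) \<noteq> {}"
  using block unfolding blockseq_def finsupp_def supp_def by auto

lemma block_nonzero_bounds: "b i n \<noteq> 0 \<Longrightarrow> Min (supp (b i)) \<le> n \<and> n \<le> Max (supp (b i))"
  using block_supp[of i] by (auto simp: supp_def)

lemma block_Min_le_Max: "Min (supp (b i)) \<le> Max (supp (b i))"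
  using block_supp[of i] by auto

lemma block_order: "i < j \<Longrightarrow> Max (supp (b i)) < Min (supp (b j))"
proof (induction j)
  case (Suc j)
  have "Max (supp (b j)) < Min (supp (b (Suc j)))"
    using block unfolding blockseq_def by auto
  then show ?case
    using Suc block_Min_le_Max[of j] by (cases "i = j") auto
qed simp

lemma block_Max_mono: "i \<le> j \<Longrightarrow> Max (supp (b i)) \<le> Max (supp (b j))"
  using block_order[of i j] block_Min_le_Max[of j] by (cases "i = j") auto

lemma block_index_le_Min: "i \<le> Min (supp (b i))"
proof (induction i)
  case (Suc i)
  then show ?case using block_order[of i "Suc i"] block_Min_le_Max[of i] by linarith
qed simp

lemma block_vanish_below: "n < i \<Longrightarrow> b i n = 0"
  using block_nonzero_bounds[of i n] block_index_le_Min[of i] by linarith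

lemma block_truncate:
  assumes "j < k"
  shows "(\<lambda>n. if n \<le> Max (supp (b j)) then lincomb k c b n else 0) = lincomb (Suc j) c b"
proof (rule ext)
  fix n
  show "(if n \<le> Max (supp (b j)) then lincomb k c b n else 0) = lincomb (Suc j) c b n"
  proof (cases "n \<le> Max (supp (b j))")
    case True
    have "b i n = 0" if "j < i" for i
      using True block_order[OF that] block_nonzero_bounds[of i n] by fastforce
    then have "lincomb k c b n = lincomb (Suc j) c b n"
      unfolding lincomb_def using assms by (intro sum.mono_neutral_right) auto
    then show ?thesis using True by simp
  next
    case False
    have "b i n = 0" if "i \<le> j" for i
      using False block_Max_mono[OF that] block_nonzero_bounds[of i n] by fastforce
    then have "lincomb (Suc j) c b n = 0"
      unfolding lincomb_def by simp
    then show ?thesis using False by simp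
  qed
qed

end

context basis_setting
begin

lemma block_coeff_bound:
  assumes "block b" "j < k"
  shows "N (\<lambda>n. c j * b j n) \<le> 2 * C * N (lincomb k c b)"
proof -
  let ?w = "lincomb k c b"
  have fw: "finsupp ?w"
    using block_finsupp[OF assms(1)] by (intro finsupp_lincomb)
  have fl: "finsupp (lincomb i c b)" for i
    using block_finsupp[OF assms(1)] by (intro finsupp_lincomb)
  have partial: "N (lincomb i c b) \<le> C * N ?w" if "i \<le> k" for i
  proof (cases i)
    case 0
    then show ?thesis using N_nonneg[OF fw] C_ge_1 by simp
  next
    case (Suc i')
    then show ?thesis
      using truncate_bound[OF fw, of "Max (supp (b i'))"] block_truncate[OF assms(1), of i' k c] that
      by simp
  qed
  have "(\<lambda>n. c j * b j n) = (\<lambda>n. lincomb (Suc j) c b n - lincomb j c b n)"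
    by (simp add: lincomb_Suc)
  then have "N (\<lambda>n. c j * b j n) \<le> N (lincomb (Suc j) c b) + N (lincomb j c b)"
    using N_diff_le[OF fl fl] by simp
  then show ?thesis
    using partial[of "Suc j"] partial[of j] assms(2) by simp
qed

end

lemma fspan_mono: "S \<subseteq> S' \<Longrightarrow> fspan FF S \<subseteq> fspan FF S'"
  unfolding fspan_def by blast

lemma fspan_vanish: "w \<in> fspan FF S \<Longrightarrow> \<forall>s\<in>S. s i = 0 \<Longrightarrow> w i = 0"
  unfolding fspan_def lincomb_def by (auto intro!: sum.neutral)

lemma fspan_finsupp: "w \<in> fspan FF S \<Longrightarrow> \<forall>s\<in>S. finsupp s \<Longrightarrow> finsupp w"
  unfolding fspan_def by (auto intro!: finsupp_lincomb)

context basis_setting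
begin

lemma fspan_zero: "(\<lambda>_. 0) \<in> fspan FF S"
  unfolding fspan_def by (rule CollectI, rule exI[of _ 0]) auto

lemma fspan_add_scaled:
  assumes "w \<in> fspan FF S" "a \<in> FF" "s \<in> S"
  shows "(\<lambda>n. w n + a * s n) \<in> fspan FF S"
proof -
  obtain k a0 v where kv: "\<forall>i<k. a0 i \<in> FF \<and> v i \<in> S" "w = lincomb k a0 v"
    using assms(1) unfolding fspan_def by auto
  have "(\<lambda>n. w n + a * s n) = lincomb (Suc k) (a0(k := a)) (v(k := s))"
    unfolding lincomb_Suc kv(2) by (auto intro!: ext lincomb_cong[THEN fun_cong])
  moreover have "\<forall>i<Suc k. (a0(k := a)) i \<in> FF \<and> (v(k := s)) i \<in> S"
    using kv assms by (auto simp: less_Suc_eq)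
  ultimately show ?thesis unfolding fspan_def by blast
qed

lemma lincomb_in_fspan:
  assumes "\<forall>j. c j \<in> FF" "\<forall>j<M. c j \<noteq> 0 \<longrightarrow> j \<in> T"
  shows "lincomb M c b \<in> fspan FF (b ` T)"
  using assms(2)
proof (induction M)
  case (Suc M)
  then have IH: "lincomb M c b \<in> fspan FF (b ` T)" by auto
  show ?case
  proof (cases "c M = 0")
    case True
    then show ?thesis using IH unfolding lincomb_Suc by simp
  next
    case False
    then show ?thesis
      unfolding lincomb_Suc using Suc.prems assms(1) by (intro fspan_add_scaled IH) auto
  qed
qed (simp add: fspan_zero)

lemma lincomb_image_representation:
  assumes "\<forall>i<k. a i \<in> FF \<and> w i \<in> b ` T"
  shows "\<exists>M c. (\<forall>j. c j \<in> FF) \<and> (\<forall>j. j \<notin> T \<longrightarrow> c j = 0) \<and> (\<forall>j\<ge>M. c j = 0)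
           \<and> lincomb k a w = lincomb M c b"
  using assms
proof (induction k)
  case 0
  then show ?case by (intro exI[of _ 0] exI[of _ "\<lambda>_. 0"]) (auto simp: FF_0)
next
  case (Suc k)
  then obtain M c where Mc: "\<forall>j. c j \<in> FF" "\<forall>j. j \<notin> T \<longrightarrow> c j = 0" "\<forall>j\<ge>M. c j = 0"
      "lincomb k a w = lincomb M c b"
    by auto
  obtain j where j: "w k = b j" "j \<in> T" and ak: "a k \<in> FF"
    using Suc.prems by blast
  define M' where "M' = max M (Suc j)"
  define c' where "c' i = c i + (if i = j then a k else 0)" for i
  have "lincomb M' c' b = (\<lambda>n. lincomb M' c b n + a k * b j n)"
    unfolding c'_def lincomb_add_coeffs M'_def by (simp add: lincomb_single)
  also have "lincomb M' c b = lincomb M c b"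
    using Mc(3) unfolding M'_def by (intro lincomb_extend_zero) auto
  finally have "lincomb (Suc k) a w = lincomb M' c' b"
    unfolding lincomb_Suc Mc(4) j(1) by simp
  moreover have "\<forall>i. c' i \<in> FF" using Mc(1) ak FF_0 FF_add by (auto simp: c'_def)
  moreover have "\<forall>i. i \<notin> T \<longrightarrow> c' i = 0" using Mc(2) j(2) by (auto simp: c'_def)
  moreover have "\<forall>i\<ge>M'. c' i = 0" using Mc(3) by (auto simp: c'_def M'_def)
  ultimately show ?case by blast
qed

lemma fspan_image_representation:
  assumes "v \<in> fspan FF (b ` T)"
  obtains M c where "\<forall>j. c j \<in> FF" "\<forall>j. j \<notin> T \<longrightarrow> c j = 0" "\<forall>j\<ge>M. c j = 0" "v = lincomb M c b"
  using assms lincomb_image_representation unfolding fspan_def by blast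

end

lemma equivK_nth:
  assumes "equivK N K vs ws" "l < length vs"
  shows "1 / K * N (vs ! l) \<le> N (ws ! l)" "N (ws ! l) \<le> K * N (vs ! l)"
  using assms(1)[unfolded equivK_def, THEN conjunct2, rule_format, of "\<lambda>i. if i = l then 1 else 0"]
    assms(1)[unfolded equivK_def, THEN conjunct1] assms(2)
  by (auto simp: lincomb_single)

lemma Ttree_prefix:
  assumes "vs @ ws \<in> Ttree N y Z K"
  shows "vs \<in> Ttree N y Z K"
proof -
  let ?L = "length vs" and ?L' = "length (vs @ ws)"
  have e: "equivK N K (vs @ ws) (map y [0..<?L'])" and s: "set (vs @ ws) \<subseteq> Z"
    using assms unfolding Ttree_def by auto
  have "equivK N K vs (map y [0..<?L])"
    unfolding equivK_def
  proof (intro conjI allI)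
    fix a :: "nat \<Rightarrow> real"
    let ?a = "\<lambda>i. if i < ?L then a i else 0"
    have 1: "lincomb ?L' ?a (\<lambda>i. (vs @ ws) ! i) = lincomb ?L a (\<lambda>i. vs ! i)"
      by (subst lincomb_extend_zero[of ?L]) (auto intro!: lincomb_cong simp: nth_append)
    have 2: "lincomb (length (map y [0..<?L'])) ?a (\<lambda>i. map y [0..<?L'] ! i)
        = lincomb (length (map y [0..<?L])) a (\<lambda>i. map y [0..<?L] ! i)"
      by (simp, subst lincomb_extend_zero[of ?L]) (auto intro!: lincomb_cong)
    show "1 / K * N (lincomb ?L a (\<lambda>i. vs ! i))
        \<le> N (lincomb (length (map y [0..<?L])) a (\<lambda>i. map y [0..<?L] ! i))"
      "N (lincomb (length (map y [0..<?L])) a (\<lambda>i. map y [0..<?L] ! i))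
        \<le> K * N (lincomb ?L a (\<lambda>i. vs ! i))"
      using e[unfolded equivK_def, THEN conjunct2, rule_format, of ?a] unfolding 1 2 by auto
  qed simp
  then show ?thesis using s unfolding Ttree_def by auto
qed

context basis_setting
begin

lemma equivK_Nil: "equivK N K [] []"
  unfolding equivK_def by simp

text \<open>By the coefficient bound, moving the i-th vector by at most e i changes
  N (\<Sum>i. a i * v i) by at most 2 C N (\<Sum>i. a i * y i) (\<Sum>i. e i) \<le> N (\<Sum>i. a i * y i) / (2 K).\<close>
lemma equivK_perturb:
  assumes y: "block y" "\<And>i. N (y i) = 1" and K: "K \<ge> 1"
    and len: "length vs = k" "length zs = k"
    and eq: "equivK N K vs (map y [0..<k])"
    and fs: "\<And>i. i < k \<Longrightarrow> finsupp (vs ! i)" "\<And>i. i < k \<Longrightarrow> finsupp (zs ! i)"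
    and close: "\<And>i. i < k \<Longrightarrow> N (\<lambda>n. (zs ! i) n - (vs ! i) n) \<le> e i"
    and e_sum: "(\<Sum>i<k. e i) \<le> 1 / (4 * C * K)"
  shows "equivK N (2 * K) zs (map y [0..<k])"
  unfolding equivK_def len(2)
proof (intro conjI allI)
  show "k = length (map y [0..<k])" by simp
  fix a :: "nat \<Rightarrow> real"
  have yl: "lincomb (length (map y [0..<k])) a (\<lambda>i. map y [0..<k] ! i) = lincomb k a y"
    by (simp, rule lincomb_cong) auto
  let ?w = "lincomb k a y" and ?v = "lincomb k a (\<lambda>i. vs ! i)" and ?z = "lincomb k a (\<lambda>i. zs ! i)"
  let ?D = "lincomb k a (\<lambda>i n. (zs ! i) n - (vs ! i) n)"
  have fw: "finsupp ?w" using block_finsupp[OF y(1)] by (intro finsupp_lincomb)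
  have fv: "finsupp ?v" and fz: "finsupp ?z" and fD: "finsupp ?D"
    using fs by (auto intro!: finsupp_lincomb finsupp_diff)
  have Nw: "0 \<le> N ?w" using N_nonneg[OF fw] .
  have e0: "0 \<le> e i" if "i < k" for i
    using close[OF that] N_nonneg[OF finsupp_diff[OF fs(2)[OF that] fs(1)[OF that]]] by linarith
  have coeff: "\<bar>a i\<bar> \<le> 2 * C * N ?w" if "i < k" for i
    using block_coeff_bound[OF y(1) that, of a] N_scale[OF block_finsupp[OF y(1)], of "a i"] y(2)[of i]
    by simp
  have "N ?D \<le> (\<Sum>i<k. \<bar>a i\<bar> * N (\<lambda>n. (zs ! i) n - (vs ! i) n))"
    using fs by (intro N_lincomb_le finsupp_diff) auto
  also have "\<dots> \<le> (\<Sum>i<k. (2 * C * N ?w) * e i)"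
  proof (intro sum_mono mult_mono)
    fix i assume "i \<in> {..<k}"
    then show "\<bar>a i\<bar> \<le> 2 * C * N ?w" "N (\<lambda>n. (zs ! i) n - (vs ! i) n) \<le> e i"
      "0 \<le> 2 * C * N ?w" "0 \<le> N (\<lambda>n. (zs ! i) n - (vs ! i) n)"
      using close coeff Nw C_ge_1 N_nonneg[OF finsupp_diff[OF fs(2) fs(1)]] by auto
  qed
  also have "\<dots> = (2 * C * N ?w) * (\<Sum>i<k. e i)" by (simp add: sum_distrib_left)
  also have "\<dots> \<le> (2 * C * N ?w) * (1 / (4 * C * K))"
    using e_sum C_ge_1 Nw by (intro mult_left_mono) auto
  also have "\<dots> = N ?w / (2 * K)" using C_ge_1 K by (simp add: field_simps)
  finally have ND: "N ?D \<le> N ?w / (2 * K)" .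
  have Deq: "(\<lambda>n. ?z n - ?v n) = ?D" by (rule lincomb_diff_vectors)
  have z_le: "N ?z \<le> N ?v + N ?D" using N_le_add_diff[OF fz fv] Deq by simp
  have "(\<lambda>n. ?v n - ?z n) = (\<lambda>n. - ?D n)" using Deq by (metis minus_diff_eq)
  then have v_le: "N ?v \<le> N ?z + N ?D" using N_le_add_diff[OF fv fz] N_minus[OF fD] by simp
  have eqa: "1 / K * N ?v \<le> N ?w" "N ?w \<le> K * N ?v"
    using eq[unfolded equivK_def, THEN conjunct2, rule_format, of a] len yl by auto
  have "1 * N ?w \<le> (2 * K * K) * N ?w"
    using mult_mono[OF K K] K Nw by (intro mult_right_mono) auto
  then have "N ?w / (2 * K) \<le> K * N ?w" using K by (simp add: field_simps)
  moreover have "N ?v \<le> K * N ?w" using eqa(1) K by (simp add: field_simps)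
  ultimately have "N ?z \<le> 2 * K * N ?w"
    using z_le ND by linarith
  then show "1 / (2 * K) * N ?z \<le> N (lincomb (length (map y [0..<k])) a (\<lambda>i. map y [0..<k] ! i))"
    unfolding yl using K by (simp add: field_simps)
  have "N ?w \<le> K * N ?z + K * N ?D"
    using eqa(2) mult_left_mono[OF v_le, of K] K by (simp add: algebra_simps)
  moreover have "K * N ?D \<le> N ?w / 2" using ND K by (simp add: field_simps)
  ultimately show "N (lincomb (length (map y [0..<k])) a (\<lambda>i. map y [0..<k] ! i)) \<le> 2 * K * N ?z"
    unfolding yl by linarith
qed

end

section \<open>Finite grids of rational combinations\<close>

text \<open>A finite grid of FF-combinations k_j / D of x_0, ..., x_(M-1) with |k_j| \<le> R: the
  denominator D makes the rounding error at most e, and by the coefficient bound the radius R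
  covers every combination v with 2 C N v \<le> B.\<close>
definition grid_denominator :: "(vec \<Rightarrow> real) \<Rightarrow> (nat \<Rightarrow> vec) \<Rightarrow> real \<Rightarrow> nat \<Rightarrow> nat" where
  "grid_denominator N x e M = nat \<lceil>(\<Sum>j<M. N (x j)) / e\<rceil> + 1"

definition grid_radius :: "(vec \<Rightarrow> real) \<Rightarrow> (nat \<Rightarrow> vec) \<Rightarrow> real \<Rightarrow> real \<Rightarrow> nat \<Rightarrow> int" where
  "grid_radius N x e B M = \<lceil>B * (\<Sum>j<M. 1 / N (x j)) * real (grid_denominator N x e M)\<rceil> + 1"

definition grid :: "(vec \<Rightarrow> real) \<Rightarrow> (nat \<Rightarrow> vec) \<Rightarrow> real \<Rightarrow> real \<Rightarrow> nat \<Rightarrow> vec set" where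
  "grid N x e B M = (\<lambda>ks. lincomb M (\<lambda>j. of_int (ks ! j) / real (grid_denominator N x e M)) x) `
      {ks. set ks \<subseteq> {- grid_radius N x e B M..grid_radius N x e B M} \<and> length ks = M}"

lemma finite_grid: "finite (grid N x e B M)"
  unfolding grid_def by (intro finite_imageI finite_lists_length_eq) simp

lemma grid_finsupp: "block x \<Longrightarrow> z \<in> grid N x e B M \<Longrightarrow> finsupp z"
  unfolding grid_def using block_finsupp by (auto intro!: finsupp_lincomb)

context basis_setting
begin

lemma grid_approx:
  assumes x: "block x" and e: "e > 0" and c: "\<forall>j. c j \<in> FF"
    and B: "2 * C * N (lincomb M c x) \<le> B"
  shows "\<exists>q. (\<forall>j. q j \<in> FF) \<and> (\<forall>j. c j = 0 \<longrightarrow> q j = 0) \<and> lincomb M q x \<in> grid N x e B M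
           \<and> N (\<lambda>n. lincomb M q x n - lincomb M c x n) \<le> e"
proof -
  define D where "D = grid_denominator N x e M"
  define R where "R = grid_radius N x e B M"
  define S where "S = (\<Sum>j<M. N (x j))"
  define S1 where "S1 = (\<Sum>j<M. 1 / N (x j))"
  let ?v = "lincomb M c x"
  have fx: "finsupp (x j)" for j using block_finsupp[OF x] .
  have Nx_pos: "N (x j) > 0" for j
  proof -
    have "x j \<noteq> (\<lambda>_. 0)" using x unfolding blockseq_def by auto
    then have "N (x j) \<noteq> 0" using N_eq_0D[OF fx] by blast
    then show ?thesis using N_nonneg[OF fx, of j] by linarith
  qed
  have D_pos: "real D > 0" unfolding D_def grid_denominator_def by simp
  have "S / e \<le> real (nat \<lceil>S / e\<rceil>)" by (rule real_nat_ceiling_ge)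
  then have DS: "S / e < real D" unfolding D_def grid_denominator_def S_def by simp
  define q where "q j = of_int \<lfloor>c j * D\<rfloor> / real D" for j
  have qF: "\<forall>j. q j \<in> FF"
    unfolding q_def using FF_divide[OF FF_of_int FF_of_nat[of D]] by simp
  have q0: "\<forall>j. c j = 0 \<longrightarrow> q j = 0" unfolding q_def by simp
  have qc: "\<bar>q j - c j\<bar> \<le> 1 / real D" for j
  proof -
    have "q j - c j = (of_int \<lfloor>c j * D\<rfloor> - c j * D) / real D"
      unfolding q_def using D_pos by (simp add: field_simps)
    moreover have "\<bar>of_int \<lfloor>c j * D\<rfloor> - c j * D\<bar> \<le> 1" by linarith
    ultimately show ?thesis using D_pos by (simp add: abs_div_pos divide_right_mono)
  qed
  have "0 \<le> 2 * C * N ?v" using C_ge_1 N_nonneg[OF finsupp_lincomb[OF fx]] by simp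
  then have B0: "0 \<le> B" using B by linarith
  have cb: "\<bar>c j\<bar> * real D \<le> B * S1 * real D" if "j < M" for j
  proof -
    have "\<bar>c j\<bar> * N (x j) \<le> B"
      using block_coeff_bound[OF x that, of c] B N_scale[OF fx] by simp
    then have "\<bar>c j\<bar> \<le> B * (1 / N (x j))" using Nx_pos[of j] by (simp add: field_simps)
    also have "\<dots> \<le> B * S1"
    proof (rule mult_left_mono[OF _ B0])
      show "1 / N (x j) \<le> S1"
        unfolding S1_def using that Nx_pos by (intro member_le_sum) (auto intro: less_imp_le)
    qed
    finally show ?thesis using D_pos by (simp add: mult_right_mono)
  qed
  define ks where "ks = map (\<lambda>j. \<lfloor>c j * D\<rfloor>) [0..<M]"
  have ks_R: "set ks \<subseteq> {- R..R}"
  proof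
    fix r assume "r \<in> set ks"
    then obtain j where j: "j < M" "r = \<lfloor>c j * D\<rfloor>" unfolding ks_def by auto
    have "\<bar>c j * D\<bar> \<le> B * S1 * real D" using cb[OF j(1)] D_pos by (simp add: abs_mult)
    moreover have "R = \<lceil>B * S1 * real D\<rceil> + 1" unfolding R_def grid_radius_def S1_def D_def by simp
    ultimately show "r \<in> {- R..R}" using j(2) by (simp, linarith)
  qed
  have "lincomb M q x = lincomb M (\<lambda>j. of_int (ks ! j) / real D) x"
    unfolding q_def ks_def by (rule lincomb_cong) auto
  then have in_grid: "lincomb M q x \<in> grid N x e B M"
    unfolding grid_def D_def[symmetric] R_def[symmetric] using ks_R by (auto simp: ks_def)
  have "N (\<lambda>n. lincomb M q x n - ?v n) = N (lincomb M (\<lambda>j. q j - c j) x)"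
    unfolding lincomb_diff_coeffs ..
  also have "\<dots> \<le> (\<Sum>j<M. \<bar>q j - c j\<bar> * N (x j))" using fx by (intro N_lincomb_le)
  also have "\<dots> \<le> (\<Sum>j<M. (1 / real D) * N (x j))"
    using qc Nx_pos by (intro sum_mono mult_right_mono) (auto intro: less_imp_le)
  also have "\<dots> = S / real D" unfolding S_def by (simp add: sum_divide_distrib)
  also have "\<dots> \<le> e" using DS D_pos e by (simp add: field_simps)
  finally show ?thesis using qF q0 in_grid by blast
qed

end

section \<open>Ranks and runs of the game\<close>

lemma rho_lt_mono: "rho_lt T s \<alpha> \<Longrightarrow> \<alpha> \<le> \<alpha>' \<Longrightarrow> rho_lt T s \<alpha>'"
  by (erule rho_lt.cases) (auto intro: rho_lt.intros order_less_le_trans)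

lemma rho_lt_append:
  assumes "\<gamma> < \<xi>" and ext: "\<And>w. w \<noteq> [] \<Longrightarrow> t @ w \<in> T \<Longrightarrow> rho_lt T (t @ w) \<gamma>"
    and "t @ w \<in> T"
  shows "rho_lt T (t @ w) \<xi>"
proof (cases "w = []")
  case True
  have "rho_lt T t \<xi>"
    by (rule rho_lt.intros[OF assms(1)]) (use ext in blast)
  then show ?thesis using True by simp
next
  case False
  then show ?thesis using ext[OF False assms(3)] rho_lt_mono less_imp_le[OF assms(1)] by blast
qed

lemma rank_le_intro:
  assumes "\<gamma> < \<beta>" "\<And>w. w \<noteq> [] \<Longrightarrow> w \<in> T \<Longrightarrow> rho_lt T w \<gamma>"
  shows "rank_le T \<beta>"
  unfolding rank_le_def using rho_lt_append[of \<gamma> \<beta> "[]" T] assms by auto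

lemma msum_Nil: "(\<lambda>_. 0) \<in> msum []"
  unfolding msum_def by auto

lemma msum_snoc:
  assumes "w \<in> msum Fs" "u \<in> F"
  shows "(\<lambda>n. w n + u n) \<in> msum (Fs @ [F])"
proof -
  obtain f where f: "\<forall>j<length Fs. f j \<in> Fs ! j" "w = (\<lambda>n. \<Sum>j<length Fs. f j n)"
    using assms(1) unfolding msum_def by auto
  let ?f = "f(length Fs := u)"
  have "\<forall>j<length (Fs @ [F]). ?f j \<in> (Fs @ [F]) ! j"
    using f(1) assms(2) by (auto simp: nth_append less_Suc_eq)
  moreover have "(\<lambda>n. w n + u n) = (\<lambda>n. \<Sum>j<length (Fs @ [F]). ?f j n)"
    using f(2) by (auto intro!: ext sum.cong)
  ultimately show ?thesis unfolding msum_def by blast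
qed

lemma live_snoc:
  assumes "live FF X \<sigma> h" "II_legal FF X h (fst (\<sigma> h)) F z" "\<not> ozero (snd (\<sigma> h))"
  shows "live FF X \<sigma> (h @ [(F, z)])"
  unfolding live_def
proof (intro allI impI)
  fix j assume "j < length (h @ [(F, z)])"
  then consider "j < length h" | "j = length h" by fastforce
  then show "II_legal FF X (take j (h @ [(F, z)])) (fst (\<sigma> (take j (h @ [(F, z)]))))
      (fst ((h @ [(F, z)]) ! j)) (snd ((h @ [(F, z)]) ! j)) \<and> \<not> ozero (snd (\<sigma> (take j (h @ [(F, z)]))))"
    by cases (use assms in \<open>auto simp: live_def nth_append\<close>)
qed

section \<open>Bounding the integer moves of I\<close>

locale I_strategy = basis_setting N FF C
  for N :: "vec \<Rightarrow> real" and FF :: "real set" and C :: real +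
  fixes x y :: "nat \<Rightarrow> vec" and K :: real and \<beta> :: "'o::wellorder"
    and \<sigma> :: "(vec set \<times> vec) list \<Rightarrow> nat \<times> 'o"
  assumes x_block: "blockseq (WW FF) x"
    and y_block: "nblockseq N (fspan FF (range x)) y"
    and K_ge_1: "1 \<le> K"
    and \<sigma>_decreasing: "\<And>h. live FF (fspan FF (range x)) \<sigma> h \<Longrightarrow>
          snd (\<sigma> h) < (if h = [] then \<beta> else snd (\<sigma> (butlast h)))"
    and \<sigma>_wins: "\<And>h. complete FF (fspan FF (range x)) \<sigma> h \<Longrightarrow>
          \<not> equivK N (2 * K) (map snd h) (map y [0..<length h])"
begin

lemma block_x: "block x"
  by (rule blockseq_mono[OF _ x_block]) (auto simp: WW_def)

lemma fspan_x_finsupp: "w \<in> fspan FF (x ` S) \<Longrightarrow> finsupp w"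
  using block_finsupp[OF block_x] by (auto intro: fspan_finsupp)

lemma block_y: "block y"
  using y_block fspan_x_finsupp blockseq_mono[of "fspan FF (range x)" "{w. finsupp w}" y]
  unfolding nblockseq_def by blast

lemma N_y: "N (y i) = 1"
  using y_block unfolding nblockseq_def by auto

definition tolerance :: "nat \<Rightarrow> real" where
  "tolerance l = 1 / (4 * C * K) * (1 / 2) ^ Suc l"

lemma tolerance_pos: "0 < tolerance l"
  unfolding tolerance_def using C_ge_1 K_ge_1 by simp

lemma tolerance_less: "tolerance l < 1 / K"
proof -
  have "tolerance l \<le> 1 / (4 * C * K)"
    unfolding tolerance_def using C_ge_1 K_ge_1 by (intro mult_left_le power_le_one) auto
  also have "\<dots> < 1 / K" using C_ge_1 K_ge_1 by (simp add: field_simps)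
  finally show ?thesis .
qed

lemma sum_tolerance: "(\<Sum>i<k. tolerance i) \<le> 1 / (4 * C * K)"
proof -
  have geometric: "(\<Sum>i<k. (1 / 2 :: real) ^ Suc i) = 1 - (1 / 2) ^ k"
    by (induction k) (auto simp: field_simps)
  have "(\<Sum>i<k. tolerance i) = 1 / (4 * C * K) * (1 - (1 / 2) ^ k)"
    unfolding tolerance_def geometric[symmetric] by (simp add: sum_distrib_left)
  also have "\<dots> \<le> 1 / (4 * C * K)" using C_ge_1 K_ge_1 by (intro mult_left_le) auto
  finally show ?thesis .
qed

definition grid_at :: "nat \<Rightarrow> nat \<Rightarrow> vec set" where
  "grid_at M l = grid N x (tolerance l) (2 * C * K) M"

text \<open>Runs of length at most M in which II has only played spans of some of x_0, ..., x_(M-1)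
  and grid vectors: there are finitely many, so I's integer moves on them are bounded.\<close>
definition positions :: "nat \<Rightarrow> (vec set \<times> vec) list set" where
  "positions M = {h. length h \<le> M \<and> (\<forall>l<length h. (\<exists>S\<subseteq>{..<M}. fst (h ! l) = fspan FF (x ` S))
      \<and> (\<exists>M'\<le>M. snd (h ! l) \<in> grid_at M' l))}"

lemma finite_positions: "finite (positions M)"
proof -
  define alphabet where
    "alphabet = ((\<lambda>S. fspan FF (x ` S)) ` Pow {..<M}) \<times> (\<Union>M'\<in>{..M}. \<Union>l\<in>{..<M}. grid_at M' l)"
  have "finite alphabet"
    unfolding alphabet_def grid_at_def by (intro finite_cartesian_product finite_imageI finite_UN_I finite_grid) auto
  then have "finite {h. set h \<subseteq> alphabet \<and> length h \<le> M}" by (rule finite_lists_length_le)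
  moreover have "positions M \<subseteq> {h. set h \<subseteq> alphabet \<and> length h \<le> M}"
  proof
    fix h assume h: "h \<in> positions M"
    have "h ! l \<in> alphabet" if "l < length h" for l
    proof -
      have "l < M" and hl: "\<exists>S\<subseteq>{..<M}. fst (h ! l) = fspan FF (x ` S)"
        "\<exists>M'\<le>M. snd (h ! l) \<in> grid_at M' l"
        using h that unfolding positions_def by auto
      then have "snd (h ! l) \<in> (\<Union>M'\<in>{..M}. \<Union>l\<in>{..<M}. grid_at M' l)" by auto
      moreover have "fst (h ! l) \<in> (\<lambda>S. fspan FF (x ` S)) ` Pow {..<M}" using hl(1) by auto
      ultimately show ?thesis unfolding alphabet_def by (simp add: mem_Times_iff)
    qed
    then have "set h \<subseteq> alphabet" by (metis in_set_conv_nth subsetI)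
    then show "h \<in> {h. set h \<subseteq> alphabet \<and> length h \<le> M}"
      using h unfolding positions_def by simp
  qed
  ultimately show ?thesis by (rule finite_subset[rotated])
qed

lemma Nil_in_positions: "[] \<in> positions M"
  unfolding positions_def by simp

definition move_bound :: "nat \<Rightarrow> nat" where
  "move_bound M = max M (Max ((\<lambda>h. fst (\<sigma> h)) ` positions M))"

lemma move_le_move_bound: "h \<in> positions M \<Longrightarrow> fst (\<sigma> h) \<le> move_bound M"
  unfolding move_bound_def using finite_positions by (intro max.coboundedI2 Max_ge) auto

lemma le_move_bound: "M \<le> move_bound M"
  unfolding move_bound_def by simp

definition interval_start :: "nat \<Rightarrow> nat" where
  "interval_start = rec_nat 0 (\<lambda>_ a. move_bound a + 2)"

lemma interval_start_0: "interval_start 0 = 0"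
  and interval_start_Suc: "interval_start (Suc m) = move_bound (interval_start m) + 2"
  unfolding interval_start_def by simp_all

lemma strict_mono_interval_start: "strict_mono interval_start"
proof -
  have "interval_start m < interval_start (Suc m)" for m
    using le_move_bound[of "interval_start m"] by (simp add: interval_start_Suc)
  then show ?thesis by (simp add: strict_mono_Suc_iff)
qed

definition interval :: "nat \<Rightarrow> nat set" where
  "interval m = {interval_start m..move_bound (interval_start m)}"

lemma interval_is_interval: "\<exists>a b. a \<le> b \<and> interval m = {a..b}"
  unfolding interval_def using le_move_bound by blast

lemma Min_interval_tendsto: "filterlim (\<lambda>m. Min (interval m)) at_top sequentially"
proof -
  have "Min (interval m) = interval_start m" for m
    unfolding interval_def using le_move_bound by (intro Min_eqI) auto
  then show ?thesis using filterlim_subseq[OF strict_mono_interval_start] by simp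
qed

end

section \<open>Following a branch of the tree in the game\<close>

locale I_strategy_run = I_strategy N FF C x y K \<beta> \<sigma>
  for N FF C x y K and \<beta> :: "'o::wellorder" and \<sigma> +
  fixes A :: "nat set"
  assumes A_infinite: "infinite A" and zero_in_A: "0 \<in> A"
begin

definition avoided :: "nat set" where
  "avoided = (\<Union>m\<in>A. interval m)"

definition Z :: "vec set" where
  "Z = fspan FF (x ` (- avoided))"

definition T :: "vec list set" where
  "T = Ttree N y Z K"

definition Z_coeffs :: "(nat \<Rightarrow> real) \<Rightarrow> bool" where
  "Z_coeffs c \<longleftrightarrow> (\<forall>j. c j \<in> FF) \<and> (\<forall>j\<in>avoided. c j = 0)"

definition window :: "nat \<Rightarrow> nat \<Rightarrow> vec set" where
  "window M M' = fspan FF (x ` {j. j \<notin> avoided \<and> M \<le> j \<and> j < M'})"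

text \<open>The run h follows the branch s of T. Since M is the left end of an interval removed
  from Z, every index from M on that is available to Z lies beyond I's next move.\<close>
definition tracks :: "(vec set \<times> vec) list \<Rightarrow> nat \<Rightarrow> vec list \<Rightarrow> bool" where
  "tracks h M s \<longleftrightarrow> (\<exists>m\<in>A. M = interval_start m) \<and> h \<in> positions M \<and>
     (\<forall>c. Z_coeffs c \<longrightarrow> lincomb M c x \<in> msum (map fst h)) \<and> length h = length s \<and>
     (\<forall>l<length s. N (\<lambda>n. snd (h ! l) n - (s ! l) n) \<le> tolerance l)"

lemma finsupp_Z: "v \<in> Z \<Longrightarrow> finsupp v"
  unfolding Z_def by (rule fspan_x_finsupp)

lemma exists_interval_start_above: "\<exists>m\<in>A. M \<le> interval_start m"
proof -
  obtain m where "m \<in> A" "M \<le> m" using A_infinite infinite_nat_iff_unbounded_le by blast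
  then show ?thesis
    using strict_mono_imp_increasing[OF strict_mono_interval_start, of m] by (intro bexI[of _ m]) auto
qed

lemma move_less_unavoided:
  assumes "tracks h M s" "j \<notin> avoided" "M \<le> j"
  shows "fst (\<sigma> h) < j"
proof -
  obtain m where m: "m \<in> A" "M = interval_start m" and h: "h \<in> positions M"
    using assms(1) unfolding tracks_def by auto
  have "fst (\<sigma> h) \<le> move_bound (interval_start m)" using move_le_move_bound h m(2) by simp
  moreover have "j \<notin> interval m" using assms(2) m(1) unfolding avoided_def by auto
  ultimately show ?thesis using assms(3) m(2) unfolding interval_def by auto
qed

lemma tracks_Nil: "tracks [] 0 []"
  unfolding tracks_def using zero_in_A interval_start_0 Nil_in_positions msum_Nil by auto

lemma tracks_equivK:
  assumes tr: "tracks h M s" and "s \<in> T"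
  shows "equivK N (2 * K) (map snd h) (map y [0..<length h])"
proof -
  have sZ: "set s \<subseteq> Z" and eq: "equivK N K s (map y [0..<length s])"
    using assms(2) unfolding T_def Ttree_def by auto
  have len: "length h = length s" and h: "h \<in> positions M"
    and close: "\<And>l. l < length s \<Longrightarrow> N (\<lambda>n. snd (h ! l) n - (s ! l) n) \<le> tolerance l"
    using tr unfolding tracks_def by auto
  have "finsupp (snd (h ! l))" if "l < length h" for l
    using h that grid_finsupp[OF block_x] unfolding positions_def grid_at_def by blast
  moreover have "finsupp (s ! l)" if "l < length s" for l
    using sZ finsupp_Z nth_mem[OF that] by blast
  ultimately have "equivK N (2 * K) (map snd h) (map y [0..<length s])"
    using close len
    by (intro equivK_perturb[OF block_y N_y K_ge_1 _ _ eq _ _ _ sum_tolerance]) auto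
  then show ?thesis using len by simp
qed

lemma window_legal:
  assumes "tracks h M s"
  shows "fdsubspace FF (window M M')" "window M M' \<subseteq> fspan FF (range x)"
    "\<forall>w\<in>window M M'. \<forall>i\<le>fst (\<sigma> h). w i = 0"
proof -
  have "finite {j. j \<notin> avoided \<and> M \<le> j \<and> j < M'}" by simp
  then show "fdsubspace FF (window M M')" unfolding fdsubspace_def window_def by blast
  show "window M M' \<subseteq> fspan FF (range x)" unfolding window_def by (rule fspan_mono) auto
  have "x j i = 0" if "j \<notin> avoided" "M \<le> j" "i \<le> fst (\<sigma> h)" for i j
    using move_less_unavoided[OF assms that(1,2)] that(3) block_vanish_below[OF block_x] by simp
  then show "\<forall>w\<in>window M M'. \<forall>i\<le>fst (\<sigma> h). w i = 0"
    unfolding window_def by (auto intro: fspan_vanish)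
qed

lemma lincomb_in_msum_window:
  assumes cover: "\<forall>c. Z_coeffs c \<longrightarrow> lincomb M c x \<in> msum Fs" and "M \<le> M'" "Z_coeffs c"
  shows "lincomb M' c x \<in> msum (Fs @ [window M M'])"
proof -
  define d where "d i = (if M \<le> i then c i else 0)" for i
  have "lincomb M' d x = (\<lambda>n. \<Sum>i\<in>{M..<M'}. c i * x i n)"
    unfolding lincomb_def d_def by (rule ext, rule sum.mono_neutral_cong_right) auto
  moreover have "lincomb M' d x \<in> window M M'"
    unfolding window_def using assms(3) FF_0 by (intro lincomb_in_fspan) (auto simp: d_def Z_coeffs_def)
  ultimately show ?thesis
    using msum_snoc[OF cover[rule_format, OF assms(3)]] lincomb_split[OF assms(2), of c x] by simp
qed

lemma positions_snoc:
  assumes "h \<in> positions M" "M < M'" "z \<in> grid_at M' (length h)"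
  shows "h @ [(window M M', z)] \<in> positions M'"
proof -
  have "window M M' = fspan FF (x ` {j. j \<notin> avoided \<and> M \<le> j \<and> j < M'})"
    unfolding window_def ..
  moreover have "{j. j \<notin> avoided \<and> M \<le> j \<and> j < M'} \<subseteq> {..<M'}" by auto
  moreover have "length h \<le> M" and
    "\<forall>l<length h. (\<exists>S\<subseteq>{..<M}. fst (h ! l) = fspan FF (x ` S)) \<and> (\<exists>M''\<le>M. snd (h ! l) \<in> grid_at M'' l)"
    using assms(1) unfolding positions_def by auto
  ultimately show ?thesis
    using assms(2,3) unfolding positions_def
    by (auto simp: nth_append less_Suc_eq) (meson order.trans less_imp_le lessThan_subset_iff)+
qed

lemma grid_approx_Z:
  assumes "v \<in> Z" "N v \<le> K"
  obtains Mv where "\<And>M'. Mv \<le> M' \<Longrightarrow> \<exists>q. Z_coeffs q \<and> lincomb M' q x \<in> grid_at M' l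
      \<and> N (\<lambda>n. lincomb M' q x n - v n) \<le> tolerance l"
proof -
  obtain Mv c where c: "\<forall>j. c j \<in> FF" "\<forall>j. j \<notin> - avoided \<longrightarrow> c j = 0" "\<forall>j\<ge>Mv. c j = 0"
      "v = lincomb Mv c x"
    using assms(1) unfolding Z_def by (rule fspan_image_representation)
  show thesis
  proof (rule that)
    fix M' assume "Mv \<le> M'"
    then have v: "v = lincomb M' c x" using c(3,4) lincomb_extend_zero by simp
    have "2 * C * N (lincomb M' c x) \<le> 2 * C * K" using assms(2) v C_ge_1 by simp
    from grid_approx[OF block_x tolerance_pos c(1) this] obtain q where
      "\<forall>j. q j \<in> FF" "\<forall>j. c j = 0 \<longrightarrow> q j = 0" "lincomb M' q x \<in> grid_at M' l"
      "N (\<lambda>n. lincomb M' q x n - v n) \<le> tolerance l"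
      unfolding grid_at_def v by blast
    then show "\<exists>q. Z_coeffs q \<and> lincomb M' q x \<in> grid_at M' l \<and> N (\<lambda>n. lincomb M' q x n - v n) \<le> tolerance l"
      using c(2) unfolding Z_coeffs_def by auto
  qed
qed

text \<open>II answers a new vector v of T with the span of the x_j available to Z up to the next
  interval start above the support of v, and a grid approximation of v.\<close>
lemma II_response:
  assumes tr: "tracks h M s" and sv: "s @ [v] \<in> T"
  obtains F z M' where "II_legal FF (fspan FF (range x)) h (fst (\<sigma> h)) F z"
    "tracks (h @ [(F, z)]) M' (s @ [v])"
proof -
  define l where "l = length s"
  have vZ: "v \<in> Z" and eqv: "equivK N K (s @ [v]) (map y [0..<Suc l])"
    using sv unfolding T_def Ttree_def l_def by auto
  have "1 / K * N v \<le> 1" "1 \<le> K * N v"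
    using equivK_nth[OF eqv, of l] N_y[of l] unfolding l_def by (auto simp: nth_append)
  then have Nv: "N v \<le> K" "1 / K \<le> N v" using K_ge_1 by (simp_all add: field_simps)
  obtain Mv where Mv: "\<And>M'. Mv \<le> M' \<Longrightarrow> \<exists>q. Z_coeffs q \<and> lincomb M' q x \<in> grid_at M' l
      \<and> N (\<lambda>n. lincomb M' q x n - v n) \<le> tolerance l"
    using grid_approx_Z[OF vZ Nv(1)] by blast
  obtain m where m: "m \<in> A" "Suc M + Mv \<le> interval_start m"
    using exists_interval_start_above by blast
  define M' where "M' = interval_start m"
  obtain q where q: "Z_coeffs q" "lincomb M' q x \<in> grid_at M' l"
      "N (\<lambda>n. lincomb M' q x n - v n) \<le> tolerance l"
    using Mv[of M'] m(2) unfolding M'_def by auto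
  define z where "z = lincomb M' q x"
  have z_nonzero: "z \<noteq> (\<lambda>_. 0)"
  proof
    assume "z = (\<lambda>_. 0)"
    then have "N v \<le> tolerance l" using q(3) N_minus[OF finsupp_Z[OF vZ]] unfolding z_def by simp
    then show False using tolerance_less[of l] Nv(2) by linarith
  qed
  have h: "h \<in> positions M" "length h = l" and cover: "\<forall>c. Z_coeffs c \<longrightarrow> lincomb M c x \<in> msum (map fst h)"
    and close: "\<And>i. i < l \<Longrightarrow> N (\<lambda>n. snd (h ! i) n - (s ! i) n) \<le> tolerance i"
    using tr unfolding tracks_def l_def by auto
  have MM': "M < M'" using m(2) unfolding M'_def by simp
  have cover': "\<forall>c. Z_coeffs c \<longrightarrow> lincomb M' c x \<in> msum (map fst h @ [window M M'])"
    using lincomb_in_msum_window[OF cover] MM' by simp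
  have "II_legal FF (fspan FF (range x)) h (fst (\<sigma> h)) (window M M') z"
    unfolding II_legal_def using window_legal[OF tr] z_nonzero cover' q(1) unfolding z_def by blast
  moreover have "tracks (h @ [(window M M', z)]) M' (s @ [v])"
    unfolding tracks_def
  proof (intro conjI)
    show "\<exists>m\<in>A. M' = interval_start m" using m(1) unfolding M'_def by blast
    show "h @ [(window M M', z)] \<in> positions M'"
      using positions_snoc[OF h(1) MM'] q(2) h(2) unfolding z_def by simp
    show "\<forall>c. Z_coeffs c \<longrightarrow> lincomb M' c x \<in> msum (map fst (h @ [(window M M', z)]))"
      using cover' by simp
    show "length (h @ [(window M M', z)]) = length (s @ [v])" using h(2) l_def by simp
    show "\<forall>i<length (s @ [v]). N (\<lambda>n. snd ((h @ [(window M M', z)]) ! i) n - ((s @ [v]) ! i) n) \<le> tolerance i"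
      using close q(3) h(2) unfolding z_def l_def by (auto simp: nth_append less_Suc_eq)
  qed
  ultimately show thesis using that by blast
qed

lemma rho_lt_tracked:
  assumes "live FF (fspan FF (range x)) \<sigma> h" "tracks h M s" "u \<noteq> []" "s @ u \<in> T"
  shows "rho_lt T (s @ u) (snd (\<sigma> h))"
  using assms
proof (induction "snd (\<sigma> h)" arbitrary: h M s u rule: less_induct)
  case less
  obtain v u' where u: "u = v # u'" using less.prems(3) by (cases u) auto
  have sv: "s @ [v] \<in> T"
    using less.prems(4) Ttree_prefix[of "s @ [v]" u'] unfolding u T_def by simp
  obtain F z M' where legal: "II_legal FF (fspan FF (range x)) h (fst (\<sigma> h)) F z"
    and tr': "tracks (h @ [(F, z)]) M' (s @ [v])"
    using II_response[OF less.prems(2) sv] .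
  have "\<not> ozero (snd (\<sigma> h))"
  proof
    assume "ozero (snd (\<sigma> h))"
    then have "complete FF (fspan FF (range x)) \<sigma> (h @ [(F, z)])"
      unfolding complete_def using less.prems(1) legal by blast
    then show False using \<sigma>_wins tracks_equivK[OF tr' sv] by blast
  qed
  then have live': "live FF (fspan FF (range x)) \<sigma> (h @ [(F, z)])"
    using live_snoc[OF less.prems(1) legal] by blast
  have lt: "snd (\<sigma> (h @ [(F, z)])) < snd (\<sigma> h)"
    using \<sigma>_decreasing[OF live'] by simp
  have "rho_lt T ((s @ [v]) @ w) (snd (\<sigma> (h @ [(F, z)])))" if "w \<noteq> []" "(s @ [v]) @ w \<in> T" for w
    using less.hyps[OF lt live' tr' that] .
  then show ?case
    using rho_lt_append[OF lt, of "s @ [v]" T u'] less.prems(4) u by simp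
qed

lemma rank_le_T: "rank_le T \<beta>"
proof (rule rank_le_intro)
  have live: "live FF (fspan FF (range x)) \<sigma> []" by (simp add: live_def)
  show "snd (\<sigma> []) < \<beta>" using \<sigma>_decreasing[OF live] by simp
  show "rho_lt T w (snd (\<sigma> []))" if "w \<noteq> []" "w \<in> T" for w
    using rho_lt_tracked[OF live tracks_Nil that(1)] that(2) by simp
qed

end

lemma (in I_strategy) rank_le_avoiding_intervals:
  assumes "infinite A" "0 \<in> A"
  shows "rank_le (Ttree N y (fspan FF {x j | j. j \<notin> (\<Union>m\<in>A. interval m)}) K) \<beta>"
proof -
  interpret I_strategy_run N FF C x y K \<beta> \<sigma> A
    using assms by unfold_locales
  have "{x j | j. j \<notin> (\<Union>m\<in>A. interval m)} = x ` (- avoided)"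
    unfolding avoided_def by auto
  then show ?thesis using rank_le_T unfolding T_def Z_def by simp
qed

theorem lemma4p9:
  fixes N :: "vec \<Rightarrow> real" and FF :: "real set" and x :: "nat \<Rightarrow> vec"
    and \<beta> :: "'o::wellorder"
  assumes "setting N FF"
    and "blockseq (WW FF) x"
    and "countable {\<xi>. \<xi> < \<beta>}"
    and "\<forall>y K. nblockseq N (fspan FF (range x)) y \<and> K \<ge> 1 \<longrightarrow>
           I_ensures FF (fspan FF (range x)) \<beta>
             (\<lambda>zs. \<not> equivK N K zs (map y [0..<length zs]))"
  shows "\<forall>y K. nblockseq N (fspan FF (range x)) y \<and> K \<ge> 1 \<longrightarrow>
           (\<exists>J :: nat \<Rightarrow> nat set.
              (\<forall>m. \<exists>a b. a \<le> b \<and> J m = {a..b}) \<and>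
              filterlim (\<lambda>m. Min (J m)) at_top sequentially \<and>
              (\<forall>A. infinite A \<and> 0 \<in> A \<longrightarrow>
                 rank_le (Ttree N y (fspan FF {x j | j. j \<notin> (\<Union>m\<in>A. J m)}) K) \<beta>))"
proof (intro allI impI)
  fix y and K :: real
  assume yK: "nblockseq N (fspan FF (range x)) y \<and> K \<ge> 1"
  obtain C where C: "basis_setting N FF C" using basis_setting_exists[OF assms(1)] by blast
  have ensures: "I_ensures FF (fspan FF (range x)) \<beta> (\<lambda>zs. \<not> equivK N (2 * K) zs (map y [0..<length zs]))"
    using assms(4) yK by auto
  show "\<exists>J. (\<forall>m. \<exists>a b. a \<le> b \<and> J m = {a..b}) \<and> filterlim (\<lambda>m. Min (J m)) at_top sequentially \<and>
      (\<forall>A. infinite A \<and> 0 \<in> A \<longrightarrow> rank_le (Ttree N y (fspan FF {x j | j. j \<notin> (\<Union>m\<in>A. J m)}) K) \<beta>)"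
  proof (cases "ozero \<beta>")
    case True
    then show ?thesis using ensures basis_setting.equivK_Nil[OF C] unfolding I_ensures_def by simp
  next
    case False
    then obtain \<sigma> :: "(vec set \<times> vec) list \<Rightarrow> nat \<times> 'o" where
      "I_strategy N FF C x y K \<beta> \<sigma>"
      using ensures C assms(2) yK unfolding I_ensures_def I_strategy_def I_strategy_axioms_def by auto
    then interpret I_strategy N FF C x y K \<beta> \<sigma> .
    show ?thesis
      using interval_is_interval Min_interval_tendsto rank_le_avoiding_intervals by blast
  qed
qed

end
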